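(* Let $n>1$, $\lambda\in(0,1)$, and let $X_1,\ldots,X_n$ be a time-homogeneous Markov chain on $\{0,1\}$ with transition matrix $K=\begin{pmatrix}1-\lambda&\lambda\\ \lambda&1-\lambda\end{pmatrix}$ and $X_1\sim\pi=(1/2,1/2)$. Let $f$ satisfy $|f(x_1,\ldots,x_i,\ldots,x_n)-f(x_1,\ldots,\hat x,\ldots,x_n)|\le 1/n$ for all $x^n,\hat x$ and $1\le i\le n$. Then for every $\alpha>1$ (with $\beta=\alpha/(\alpha-1)$) and $t>0$, $$\mathbb{P}\left(\left|f-\mathcal{P}_{\bigotimes_{i=1}^n X_i}(f)\right|\ge t\right)\le 2^{1/\beta}\exp\left(-\frac{2nt^2}{\beta}+\frac{n-1}{\beta}\ln\left(2\left((1-\lambda)^\alpha+\lambda^\alpha\right)^{\frac{1}{\alpha-1}}\right)\right).$$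
   Context: $\mathcal{P}_{\bigotimes_{i=1}^n X_i}$ is the product of the marginal laws of $X_1,\ldots,X_n$ (here $\pi^{\otimes n}$), and $\mu(g)=\int g\,d\mu$. *)

theory Defs
  imports Complex_Main
begin

definition cube :: "nat \<Rightarrow> nat list set" where
  "cube n = {xs. length xs = n \<and> set xs \<subseteq> {0,1}}"

definition Kmat :: "real \<Rightarrow> nat \<Rightarrow> nat \<Rightarrow> real" where
  "Kmat lam a b = (if a = b then 1 - lam else lam)"

definition chain_pmf :: "real \<Rightarrow> nat list \<Rightarrow> real" where
  "chain_pmf lam xs = (1/2) * (\<Prod>i<length xs - 1. Kmat lam (xs ! i) (xs ! Suc i))"

definition chain_prob :: "real \<Rightarrow> nat \<Rightarrow> (nat list \<Rightarrow> bool) \<Rightarrow> real" where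
  "chain_prob lam n E = (\<Sum>xs\<in>{xs\<in>cube n. E xs}. chain_pmf lam xs)"

text \<open>Expectation of g under the product of the marginals, pi^{\<otimes>n} (uniform on {0,1}^n).\<close>
definition prod_mean :: "nat \<Rightarrow> (nat list \<Rightarrow> real) \<Rightarrow> real" where
  "prod_mean n g = (\<Sum>xs\<in>cube n. (1/2)^n * g xs)"

end

theory Submission
  imports Defs "HOL-Probability.Hoeffding"
begin

(*
  With respect to the uniform law pi^n on {0,1}^n the chain has density
  2^(n-1) * prod_i K(x_i, x_(i+1)).  Hoelder's inequality with conjugate exponents alpha, beta
  bounds the chain probability of an event A by the alpha-norm of this density times
  pi^n(A)^(1/beta); summing the path weights one transition at a time gives
  (alpha-norm)^alpha = (2^(alpha-1) ((1-lam)^alpha + lam^alpha))^(n-1).  Under pi^n the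
  coordinates are independent, and McDiarmid's inequality bounds pi^n(|f - pi^n f| >= t) by
  2 exp(-2 n t^2): an exponential-moment induction over the coordinates, each step being
  Hoeffding's lemma for a fair coin, cosh x <= exp(x^2/2).
*)

lemma cosh_le_exp_square:
  fixes x :: real
  shows "cosh x \<le> exp (x\<^sup>2 / 2)"
proof -
  have "cosh \<bar>x\<bar> \<le> exp (\<bar>x\<bar>\<^sup>2 / 2)" for x :: real
  proof -
    have "cosh \<bar>x\<bar> > 0"
      by (simp add: cosh_def add_pos_pos)
    moreover have "1 + (1/2) * (exp (2 * \<bar>x\<bar>) - 1) = exp \<bar>x\<bar> * cosh \<bar>x\<bar>"
      by (simp add: cosh_def exp_minus field_simps flip: exp_add)
    ultimately have "- (2 * \<bar>x\<bar>) * (1/2) + ln (1 + (1/2) * (exp (2 * \<bar>x\<bar>) - 1)) = ln (cosh \<bar>x\<bar>)"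
      by (simp add: ln_mult)
    with Hoeffdings_lemma_aux[of "2 * \<bar>x\<bar>" "1/2"] have "ln (cosh \<bar>x\<bar>) \<le> \<bar>x\<bar>\<^sup>2 / 2"
      by (simp add: power2_eq_square)
    with \<open>cosh \<bar>x\<bar> > 0\<close> show ?thesis
      by (metis exp_le_cancel_iff exp_ln)
  qed
  from this[of x] show ?thesis
    by (cases "x \<ge> 0") simp_all
qed

lemma exp_average_le:
  fixes x y :: real
  shows "(exp x + exp y) / 2 \<le> exp ((x + y) / 2 + (x - y)\<^sup>2 / 8)"
proof -
  have "(exp x + exp y) / 2 = exp ((x + y) / 2) * cosh ((x - y) / 2)"
    by (simp add: cosh_def field_simps flip: exp_add)
  also have "\<dots> \<le> exp ((x + y) / 2) * exp (((x - y) / 2)\<^sup>2 / 2)"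
    by (intro mult_left_mono cosh_le_exp_square) simp
  also have "\<dots> = exp ((x + y) / 2 + (x - y)\<^sup>2 / 8)"
    by (simp add: power_divide flip: exp_add)
  finally show ?thesis .
qed

lemma Holder_inequality_sum:
  fixes w a b :: "'a \<Rightarrow> real"
  assumes "finite A" and nonneg: "\<And>x. x \<in> A \<Longrightarrow> w x \<ge> 0 \<and> a x \<ge> 0 \<and> b x \<ge> 0"
    and "p > 1" "q > 1" "1/p + 1/q = 1"
  shows "(\<Sum>x\<in>A. w x * (a x * b x))
    \<le> (\<Sum>x\<in>A. w x * a x powr p) powr (1/p) * (\<Sum>x\<in>A. w x * b x powr q) powr (1/q)"
proof -
  define P where "P = (\<Sum>x\<in>A. w x * a x powr p)"
  define Q where "Q = (\<Sum>x\<in>A. w x * b x powr q)"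
  have "P \<ge> 0" "Q \<ge> 0"
    unfolding P_def Q_def using nonneg by (auto intro: sum_nonneg)
  show ?thesis
  proof (cases "P = 0 \<or> Q = 0")
    case True
    have "w x * (a x * b x) = 0" if "x \<in> A" for x
    proof -
      have "w x * a x powr p = 0 \<or> w x * b x powr q = 0"
        using True \<open>finite A\<close> nonneg \<open>x \<in> A\<close> unfolding P_def Q_def
        by (subst (asm) (1 2) sum_nonneg_eq_0_iff) auto
      then show ?thesis by auto
    qed
    then have "(\<Sum>x\<in>A. w x * (a x * b x)) = 0"
      by (intro sum.neutral) blast
    then show ?thesis by simp
  next
    case False
    with \<open>P \<ge> 0\<close> \<open>Q \<ge> 0\<close> have "P > 0" "Q > 0" by auto
    define P' Q' where "P' = P powr (1/p)" and "Q' = Q powr (1/q)"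
    have "P' > 0" "Q' > 0" "P' powr p = P" "Q' powr q = Q"
      using \<open>P > 0\<close> \<open>Q > 0\<close> assms(3,4) by (simp_all add: P'_def Q'_def powr_powr)
    have Young: "a x * b x \<le> P' * Q' * (a x powr p / (p * P) + b x powr q / (q * Q))"
      if "x \<in> A" for x
    proof -
      have "(a x / P') * (b x / Q') \<le> (a x / P') powr p / p + (b x / Q') powr q / q"
        using Youngs_inequality[of p q "a x / P'" "b x / Q'"] assms nonneg[OF that] \<open>P' > 0\<close> \<open>Q' > 0\<close>
        by auto
      also have "\<dots> = a x powr p / (p * P) + b x powr q / (q * Q)"
        using nonneg[OF that] \<open>P' > 0\<close> \<open>Q' > 0\<close> \<open>P' powr p = P\<close> \<open>Q' powr q = Q\<close>
        by (simp add: powr_divide mult.commute)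
      finally show ?thesis
        using \<open>P' > 0\<close> \<open>Q' > 0\<close> by (simp add: field_simps)
    qed
    have "(\<Sum>x\<in>A. w x * (a x * b x))
        \<le> (\<Sum>x\<in>A. w x * (P' * Q' * (a x powr p / (p * P) + b x powr q / (q * Q))))"
      using Young nonneg by (intro sum_mono mult_left_mono) auto
    also have "\<dots> = P' * Q' * (P / (p * P) + Q / (q * Q))"
      by (simp add: P_def Q_def field_simps sum_distrib_left sum_divide_distrib sum.distrib)
    also have "\<dots> = P' * Q'"
      using \<open>P > 0\<close> \<open>Q > 0\<close> assms(5) by simp
    finally show ?thesis by (simp add: P'_def Q'_def P_def Q_def)
  qed
qed

lemma finite_cube: "finite (cube n)"
  using finite_lists_length_eq[of "{0::nat,1}" n] by (simp add: cube_def conj_commute)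

lemma cube_0: "cube 0 = {[]}"
  by (auto simp: cube_def)

lemma Cons_in_cube_Suc_iff: "x # xs \<in> cube (Suc n) \<longleftrightarrow> x \<in> {0,1} \<and> xs \<in> cube n"
  by (auto simp: cube_def)

lemma cube_Suc: "cube (Suc n) = (#) 0 ` cube n \<union> (#) 1 ` cube n"
proof
  show "cube (Suc n) \<subseteq> (#) 0 ` cube n \<union> (#) 1 ` cube n"
  proof
    fix xs assume "xs \<in> cube (Suc n)"
    then obtain x ys where "xs = x # ys" "x \<in> {0,1}" "ys \<in> cube n"
      by (cases xs) (auto simp: cube_def)
    then show "xs \<in> (#) 0 ` cube n \<union> (#) 1 ` cube n" by auto
  qed
qed (auto simp: cube_def)

lemma sum_cube_Suc: "(\<Sum>xs\<in>cube (Suc n). h xs) = (\<Sum>xs\<in>cube n. h (0 # xs) + h (1 # xs))"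
proof -
  have "(\<Sum>xs\<in>cube (Suc n). h xs) = sum h ((#) 0 ` cube n) + sum h ((#) 1 ` cube n)"
    unfolding cube_Suc by (rule sum.union_disjoint) (auto simp: finite_cube)
  also have "\<dots> = (\<Sum>xs\<in>cube n. h (0 # xs)) + (\<Sum>xs\<in>cube n. h (1 # xs))"
    by (subst (1 2) sum.reindex) auto
  finally show ?thesis by (simp add: sum.distrib)
qed

lemma prod_mean_0: "prod_mean 0 h = h []"
  by (simp add: prod_mean_def cube_0)

lemma prod_mean_Suc: "prod_mean (Suc n) h = prod_mean n (\<lambda>xs. (h (0 # xs) + h (1 # xs)) / 2)"
  unfolding prod_mean_def sum_cube_Suc by (intro sum.cong) (auto simp: field_simps)

lemma prod_mean_mono:
  "(\<And>xs. xs \<in> cube n \<Longrightarrow> g xs \<le> h xs) \<Longrightarrow> prod_mean n g \<le> prod_mean n h"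
  unfolding prod_mean_def by (intro sum_mono mult_left_mono) auto

lemma prod_mean_nonneg: "(\<And>xs. xs \<in> cube n \<Longrightarrow> 0 \<le> h xs) \<Longrightarrow> 0 \<le> prod_mean n h"
  unfolding prod_mean_def by (intro sum_nonneg) auto

lemma prod_mean_cmult: "prod_mean n (\<lambda>xs. c * h xs) = c * prod_mean n h"
  unfolding prod_mean_def by (simp add: sum_distrib_left mult.left_commute)

lemma prod_mean_add: "prod_mean n (\<lambda>xs. g xs + h xs) = prod_mean n g + prod_mean n h"
  unfolding prod_mean_def by (simp add: distrib_left sum.distrib)

lemma prod_mean_uminus: "prod_mean n (\<lambda>xs. - h xs) = - prod_mean n h"
  unfolding prod_mean_def by (simp add: sum_negf)

definition bounded_differences :: "nat \<Rightarrow> real \<Rightarrow> (nat list \<Rightarrow> real) \<Rightarrow> bool" where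
  "bounded_differences n c f \<longleftrightarrow>
     (\<forall>xs\<in>cube n. \<forall>i<n. \<forall>y\<in>{0,1}. \<bar>f xs - f (xs[i := y])\<bar> \<le> c)"

lemma bounded_differences_uminus:
  "bounded_differences n c f \<Longrightarrow> bounded_differences n c (\<lambda>xs. - f xs)"
  unfolding bounded_differences_def by (smt (verit))

lemma bounded_differences_head:
  assumes "bounded_differences (Suc n) c f" "xs \<in> cube n"
  shows "\<bar>f (0 # xs) - f (1 # xs)\<bar> \<le> c"
proof -
  have "0 # xs \<in> cube (Suc n)"
    using assms(2) by (simp add: Cons_in_cube_Suc_iff)
  then have "\<bar>f (0 # xs) - f ((0 # xs)[0 := 1])\<bar> \<le> c"
    using assms(1) unfolding bounded_differences_def by blast
  then show ?thesis by simp
qed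

lemma bounded_differences_average_head:
  assumes "bounded_differences (Suc n) c f"
  shows "bounded_differences n c (\<lambda>xs. (f (0 # xs) + f (1 # xs)) / 2)"
  unfolding bounded_differences_def
proof (intro ballI allI impI)
  fix xs i y assume "xs \<in> cube n" "i < n" "y \<in> {0::nat, 1}"
  moreover have "x # xs \<in> cube (Suc n)" if "x \<in> {0,1}" for x
    using that \<open>xs \<in> cube n\<close> by (simp add: Cons_in_cube_Suc_iff)
  ultimately have "\<bar>f (x # xs) - f ((x # xs)[Suc i := y])\<bar> \<le> c" if "x \<in> {0,1}" for x
    using assms that unfolding bounded_differences_def by (meson Suc_less_eq)
  from this[of 0] this[of 1]
  show "\<bar>(f (0 # xs) + f (1 # xs)) / 2 - (f (0 # xs[i := y]) + f (1 # xs[i := y])) / 2\<bar> \<le> c"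
    by (simp add: abs_le_iff field_simps)
qed

lemma prod_mean_exp_deviation_le:
  assumes "bounded_differences n c f"
  shows "prod_mean n (\<lambda>xs. exp (s * (f xs - prod_mean n f))) \<le> exp (s\<^sup>2 * real n * c\<^sup>2 / 8)"
  using assms
proof (induction n arbitrary: f)
  case 0
  then show ?case by (simp add: prod_mean_0)
next
  case (Suc n)
  define g where "g = (\<lambda>xs. (f (0 # xs) + f (1 # xs)) / 2)"
  define m where "m = prod_mean n g"
  have step: "(exp (s * (f (0 # xs) - m)) + exp (s * (f (1 # xs) - m))) / 2
      \<le> exp (s\<^sup>2 * c\<^sup>2 / 8) * exp (s * (g xs - m))" if "xs \<in> cube n" for xs
  proof -
    have "(f (0 # xs) - f (1 # xs))\<^sup>2 \<le> c\<^sup>2"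
      using power_mono[OF bounded_differences_head[OF Suc.prems that], of 2] by simp
    then have head_sq: "(s * (f (0 # xs) - f (1 # xs)))\<^sup>2 \<le> (s * c)\<^sup>2"
      by (simp add: power_mult_distrib mult_left_mono)
    have "(exp (s * (f (0 # xs) - m)) + exp (s * (f (1 # xs) - m))) / 2
        \<le> exp ((s * (f (0 # xs) - m) + s * (f (1 # xs) - m)) / 2
                 + (s * (f (0 # xs) - m) - s * (f (1 # xs) - m))\<^sup>2 / 8)"
      by (rule exp_average_le)
    also have "\<dots> = exp (s * (g xs - m) + (s * (f (0 # xs) - f (1 # xs)))\<^sup>2 / 8)"
      by (simp add: g_def field_simps)
    also have "\<dots> \<le> exp (s * (g xs - m) + (s * c)\<^sup>2 / 8)"
      using head_sq by simp
    finally show ?thesis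
      by (simp add: power_mult_distrib mult.commute flip: exp_add)
  qed
  have "prod_mean (Suc n) (\<lambda>xs. exp (s * (f xs - prod_mean (Suc n) f)))
      = prod_mean n (\<lambda>xs. (exp (s * (f (0 # xs) - m)) + exp (s * (f (1 # xs) - m))) / 2)"
    by (simp add: prod_mean_Suc m_def g_def)
  also have "\<dots> \<le> exp (s\<^sup>2 * c\<^sup>2 / 8) * prod_mean n (\<lambda>xs. exp (s * (g xs - m)))"
    unfolding prod_mean_cmult[symmetric] by (rule prod_mean_mono) (rule step)
  also have "\<dots> \<le> exp (s\<^sup>2 * c\<^sup>2 / 8) * exp (s\<^sup>2 * real n * c\<^sup>2 / 8)"
    using Suc.IH[OF bounded_differences_average_head[OF Suc.prems]]
    by (simp add: g_def m_def)
  also have "\<dots> = exp (s\<^sup>2 * real (Suc n) * c\<^sup>2 / 8)"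
    by (simp add: field_simps flip: exp_add)
  finally show ?case .
qed

lemma prod_mean_upper_tail_le:
  assumes "bounded_differences n c f" "c > 0" "n > 0" "t \<ge> 0"
  shows "prod_mean n (\<lambda>xs. of_bool (t \<le> f xs - prod_mean n f)) \<le> exp (- 2 * t\<^sup>2 / (real n * c\<^sup>2))"
proof -
  define m where "m = prod_mean n f"
  \<comment> \<open>the minimiser of \<open>- s * t + s\<^sup>2 * n * c\<^sup>2 / 8\<close>\<close>
  define s where "s = 4 * t / (real n * c\<^sup>2)"
  have "s \<ge> 0"
    using assms by (simp add: s_def)
  have "of_bool (t \<le> f xs - m) \<le> exp (- s * t) * exp (s * (f xs - m))" for xs
  proof (cases "t \<le> f xs - m")
    case True
    then have "s * t \<le> s * (f xs - m)"
      using \<open>s \<ge> 0\<close> by (rule mult_left_mono)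
    then show ?thesis by (simp flip: exp_add)
  qed simp
  then have "prod_mean n (\<lambda>xs. of_bool (t \<le> f xs - m))
      \<le> exp (- s * t) * prod_mean n (\<lambda>xs. exp (s * (f xs - m)))"
    unfolding prod_mean_cmult[symmetric] by (intro prod_mean_mono)
  also have "\<dots> \<le> exp (- s * t) * exp (s\<^sup>2 * real n * c\<^sup>2 / 8)"
    using prod_mean_exp_deviation_le[OF assms(1)] by (simp add: m_def)
  also have "\<dots> = exp (- 2 * t\<^sup>2 / (real n * c\<^sup>2))"
    using assms by (simp add: s_def power2_eq_square field_simps flip: exp_add)
  finally show ?thesis by (simp add: m_def)
qed

lemma prod_mean_two_sided_tail_le:
  assumes "bounded_differences n c f" "c > 0" "n > 0" "t \<ge> 0"
  shows "prod_mean n (\<lambda>xs. of_bool (t \<le> \<bar>f xs - prod_mean n f\<bar>))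
    \<le> 2 * exp (- 2 * t\<^sup>2 / (real n * c\<^sup>2))"
proof -
  have "prod_mean n (\<lambda>xs. of_bool (t \<le> \<bar>f xs - prod_mean n f\<bar>))
      \<le> prod_mean n (\<lambda>xs. of_bool (t \<le> f xs - prod_mean n f)
                         + of_bool (t \<le> - f xs - prod_mean n (\<lambda>xs. - f xs)))"
    by (intro prod_mean_mono) (auto simp: prod_mean_uminus)
  also have "\<dots> \<le> 2 * exp (- 2 * t\<^sup>2 / (real n * c\<^sup>2))"
    unfolding prod_mean_add
    using prod_mean_upper_tail_le[OF assms]
      prod_mean_upper_tail_le[OF bounded_differences_uminus[OF assms(1)] assms(2-4)]
    by simp
  finally show ?thesis .
qed

lemma prod_mean_Holder:
  assumes "\<And>xs. xs \<in> cube n \<Longrightarrow> a xs \<ge> 0 \<and> b xs \<ge> 0"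
    and "p > 1" "q > 1" "1/p + 1/q = 1"
  shows "prod_mean n (\<lambda>xs. a xs * b xs)
    \<le> prod_mean n (\<lambda>xs. a xs powr p) powr (1/p) * prod_mean n (\<lambda>xs. b xs powr q) powr (1/q)"
  unfolding prod_mean_def using assms finite_cube
  by (intro Holder_inequality_sum) auto

definition path_weight :: "real \<Rightarrow> nat list \<Rightarrow> real" where
  "path_weight lam xs = (\<Prod>i<length xs - 1. Kmat lam (xs ! i) (xs ! Suc i))"

lemma chain_pmf_eq_path_weight: "chain_pmf lam xs = path_weight lam xs / 2"
  by (simp add: chain_pmf_def path_weight_def)

lemma path_weight_singleton: "path_weight lam [x] = 1"
  by (simp add: path_weight_def)

lemma path_weight_Cons_Cons: "path_weight lam (x # y # xs) = Kmat lam x y * path_weight lam (y # xs)"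
  unfolding path_weight_def by (simp add: prod.lessThan_Suc_shift del: prod.lessThan_Suc)

lemma Kmat_nonneg: "0 \<le> lam \<Longrightarrow> lam \<le> 1 \<Longrightarrow> Kmat lam a b \<ge> 0"
  by (simp add: Kmat_def)

lemma path_weight_nonneg: "0 \<le> lam \<Longrightarrow> lam \<le> 1 \<Longrightarrow> path_weight lam xs \<ge> 0"
  unfolding path_weight_def by (intro prod_nonneg) (auto simp: Kmat_nonneg)

lemma sum_path_weight_powr_Cons:
  assumes "0 \<le> lam" "lam \<le> 1" "x \<in> {0,1}"
  shows "(\<Sum>xs\<in>cube m. path_weight lam (x # xs) powr p) = ((1 - lam) powr p + lam powr p) ^ m"
  using assms(3)
proof (induction m arbitrary: x)
  case 0
  then show ?case by (simp add: cube_0 path_weight_singleton)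
next
  case (Suc m)
  have row_sum: "Kmat lam x 0 powr p + Kmat lam x 1 powr p = (1 - lam) powr p + lam powr p"
    using Suc.prems by (auto simp: Kmat_def)
  have "(\<Sum>xs\<in>cube (Suc m). path_weight lam (x # xs) powr p)
     = Kmat lam x 0 powr p * (\<Sum>xs\<in>cube m. path_weight lam (0 # xs) powr p)
       + Kmat lam x 1 powr p * (\<Sum>xs\<in>cube m. path_weight lam (1 # xs) powr p)"
    unfolding sum_cube_Suc path_weight_Cons_Cons
    by (simp add: powr_mult Kmat_nonneg path_weight_nonneg assms sum.distrib sum_distrib_left)
  also have "\<dots> = ((1 - lam) powr p + lam powr p) ^ Suc m"
    using Suc.IH[of 0] Suc.IH[of 1] row_sum by (simp flip: distrib_right)
  finally show ?case .
qed

lemma prod_mean_chain_density_powr: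
  assumes "0 \<le> lam" "lam \<le> 1"
  shows "prod_mean (Suc m) (\<lambda>xs. (2 ^ m * path_weight lam xs) powr p)
    = (2 powr (p - 1) * ((1 - lam) powr p + lam powr p)) ^ m"
proof -
  have "(2 ^ m) powr p = (2::real) powr (real m * p)"
    by (simp add: powr_powr flip: powr_realpow)
  then have "prod_mean (Suc m) (\<lambda>xs. (2 ^ m * path_weight lam xs) powr p)
      = (1/2) ^ Suc m * 2 powr (m * p) * (\<Sum>xs\<in>cube (Suc m). path_weight lam xs powr p)"
    unfolding prod_mean_def
    by (simp add: powr_mult path_weight_nonneg assms sum_distrib_left mult.assoc)
  also have "\<dots> = (1/2) ^ m * 2 powr (m * p) * ((1 - lam) powr p + lam powr p) ^ m"
    unfolding sum_cube_Suc
    using sum_path_weight_powr_Cons[OF assms, where x = 0 and m = m and p = p]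
      sum_path_weight_powr_Cons[OF assms, where x = 1 and m = m and p = p]
    by (simp add: sum.distrib)
  also have "(1/2) ^ m * 2 powr (m * p) = (2 powr (p - 1) :: real) ^ m"
  proof -
    have "(2 powr (p - 1) :: real) ^ m = 2 powr (real m * p - real m)"
      by (simp add: powr_power right_diff_distrib)
    then show ?thesis
      by (simp add: powr_diff powr_realpow power_one_over)
  qed
  also have "\<dots> * ((1 - lam) powr p + lam powr p) ^ m = (2 powr (p - 1) * ((1 - lam) powr p + lam powr p)) ^ m"
    by (simp add: power_mult_distrib)
  finally show ?thesis .
qed

lemma chain_prob_eq_prod_mean:
  "chain_prob lam (Suc m) E = prod_mean (Suc m) (\<lambda>xs. 2 ^ m * path_weight lam xs * of_bool (E xs))"
  unfolding chain_prob_def prod_mean_def chain_pmf_eq_path_weight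
  by (simp add: sum.inter_filter[OF finite_cube] power_one_over field_simps) (intro sum.cong; simp)

lemma chain_prob_le_uniform_powr:
  assumes "0 \<le> lam" "lam \<le> 1" "alpha > 1" "1 / alpha + 1 / beta = 1"
  shows "chain_prob lam (Suc m) E
    \<le> exp (real m / beta * ln (2 * ((1 - lam) powr alpha + lam powr alpha) powr (1 / (alpha - 1))))
       * prod_mean (Suc m) (\<lambda>xs. of_bool (E xs)) powr (1 / beta)"
proof -
  define S where "S = (1 - lam) powr alpha + lam powr alpha"
  have "1 / beta = 1 - 1 / alpha"
    using assms(4) by simp
  then have "beta = 1 / (1 - 1 / alpha)"
    by (metis inverse_eq_divide inverse_inverse_eq)
  then have beta: "beta = alpha / (alpha - 1)"
    using assms(3) by (simp add: field_simps)
  then have "beta > 1"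
    using assms(3) by (simp add: less_divide_eq)
  have "S > 0"
    using assms(1,2) by (cases "lam = 0") (auto simp: S_def intro: add_nonneg_pos)
  then have density_norm: "prod_mean (Suc m) (\<lambda>xs. (2 ^ m * path_weight lam xs) powr alpha) powr (1 / alpha)
      = exp (real m / beta * ln (2 * S powr (1 / (alpha - 1))))"
    unfolding prod_mean_chain_density_powr[OF assms(1,2)] S_def[symmetric]
    using assms(3) by (simp add: beta powr_def ln_mult field_simps flip: powr_realpow)
  have "of_bool P powr beta = (of_bool P :: real)" for P
    using \<open>beta > 1\<close> by (cases P) auto
  then have "prod_mean (Suc m) (\<lambda>xs. of_bool (E xs) powr beta) = prod_mean (Suc m) (\<lambda>xs. of_bool (E xs))"
    by simp
  with prod_mean_Holder[of "Suc m" "\<lambda>xs. 2 ^ m * path_weight lam xs" "\<lambda>xs. of_bool (E xs)" alpha beta]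
  show ?thesis
    using assms \<open>beta > 1\<close>
    by (simp add: chain_prob_eq_prod_mean density_norm path_weight_nonneg S_def)
qed

theorem corollary2:
  fixes n :: nat and lam alpha t :: real and f :: "nat list \<Rightarrow> real"
  assumes "n > 1"
    and "0 < lam" and "lam < 1"
    and "\<And>xs i y. xs \<in> cube n \<Longrightarrow> i < n \<Longrightarrow> y \<in> {0,1} \<Longrightarrow>
           \<bar>f xs - f (xs[i := y])\<bar> \<le> 1 / real n"
    and "alpha > 1" and "t > 0"
  shows "let beta = alpha / (alpha - 1) in
    chain_prob lam n (\<lambda>xs. \<bar>f xs - prod_mean n f\<bar> \<ge> t)
    \<le> 2 powr (1 / beta) *
       exp (- 2 * real n * t^2 / beta
            + (real n - 1) / beta * ln (2 * ((1 - lam) powr alpha + lam powr alpha) powr (1 / (alpha - 1))))"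
proof -
  obtain m where n: "n = Suc m"
    using assms(1) by (cases n) auto
  define beta where "beta = alpha / (alpha - 1)"
  define L where "L = ln (2 * ((1 - lam) powr alpha + lam powr alpha) powr (1 / (alpha - 1)))"
  define U where "U = prod_mean n (\<lambda>xs. of_bool (t \<le> \<bar>f xs - prod_mean n f\<bar>))"
  have "bounded_differences n (1 / real n) f"
    using assms(4) by (simp add: bounded_differences_def)
  from prod_mean_two_sided_tail_le[OF this] assms(1,6)
  have uniform_tail: "U \<le> 2 * exp (- 2 * real n * t\<^sup>2)"
    by (simp add: U_def power2_eq_square field_simps)
  have "1 / alpha + 1 / beta = 1"
    using assms(5) by (simp add: beta_def field_simps)
  then have "chain_prob lam n (\<lambda>xs. t \<le> \<bar>f xs - prod_mean n f\<bar>)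
      \<le> exp ((real n - 1) / beta * L) * U powr (1 / beta)"
    unfolding n U_def L_def using chain_prob_le_uniform_powr[of lam alpha beta m] assms(2,3,5) by simp
  also have "\<dots> \<le> exp ((real n - 1) / beta * L) * (2 * exp (- 2 * real n * t\<^sup>2)) powr (1 / beta)"
    using uniform_tail assms(5) unfolding U_def
    by (intro mult_left_mono powr_mono2 prod_mean_nonneg) (auto simp: beta_def)
  also have "\<dots> = 2 powr (1 / beta) * exp (- 2 * real n * t\<^sup>2 / beta + (real n - 1) / beta * L)"
    by (simp add: powr_def ln_mult diff_divide_distrib flip: exp_add)
  finally show ?thesis
    unfolding Let_def beta_def[symmetric] L_def[symmetric] .
qed

end
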